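(* Let $F$ be a field of characteristic zero. Let $N\ge0$ and let $\{d_s\}_{s\ge N}\subseteq\mathbb{N}$, $\{\tau_s\}_{s\ge N}\subseteq\mathbb{N}$ be fixed. Suppose a family of elements $\beta^s_i\in F$ ($s\ge N$, $i\ge\tau_s$) satisfies $$\beta^n_m\beta^s_t=\beta^n_m\beta^s_{m+t+d_n}+\beta^s_t\beta^n_{m+t+d_s}\quad\text{for all } n,s\ge N,\ m\ge\tau_n,\ t\ge\tau_s.$$ Then either $\beta^s_t=0$ for all $s\ge N$, $t\ge\tau_s$, or there exist a set $I\subseteq\mathbb{N}$ and integers $\Delta$, $\{k_i\}_{i\in I}$ with $\beta^i_{k_i}\ne0$, $0\le k_i-\tau_i<\Delta\le k_i+d_i$ and $\Delta\mid k_i+d_i$ for $i\in I$, such that for all $s\ge N$, $t\ge\tau_s$: $$\beta^s_t=\begin{cases}\dfrac{(k_s+d_s)\beta^s_{k_s}}{k_s+d_s+\Delta l}, & s\in I,\ t=k_s+\Delta l,\ l\ge0,\\ 0,&\text{otherwise}.\end{cases}$$ In particular, if $d_s=\tau_s=0$ for all $s$, then $\beta^s_t=0$ for all $s\ge N$, $t\ge\tau_s$.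
   Context: $\mathbb{N}$ includes $0$. The notation $\beta^s_t$ denotes an element indexed by two indices $s$ and $t$; the superscript is not a power. *)

theory Defs
  imports Main
begin

end

theory Submission
  imports Defs
begin

text \<open>
  For fixed s, the relation with n = s reads
  beta s m * beta s t = (beta s m + beta s t) * beta s (m + t + d s); so for every m in the
  support S of beta s on [tau s, \<infinity>), the number m + d s is a period of S on that half-line.
  Such periods are closed under differences, hence the least one, \<Delta>, divides all of them and
  S is an arithmetic progression k + \<Delta> \<nat> with k - tau s < \<Delta> and \<Delta> dvd k + d s.
  Along it, h l = 1 / beta s (k + \<Delta> l) satisfies h (a + b + e) = h a + h b, where
  \<Delta> e = k + d s; so h is affine with h e = 2 h 0, which is the harmonic formula.
  For n \<noteq> s the relation still shows that beta n m \<noteq> 0 and beta s (m + t + d n) \<noteq> 0 force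
  beta s t \<noteq> 0. Hence the period of beta s divides m + d n for every m in the support of
  beta n, so the periods of beta s and beta n divide each other and all coincide.
  If d s = tau s = 0 then \<Delta> \<le> k + d s = k < tau s + \<Delta> = \<Delta>, so the support is empty.
\<close>

definition period_from :: "nat \<Rightarrow> nat set \<Rightarrow> nat \<Rightarrow> bool" where
  "period_from a S p \<longleftrightarrow> (\<forall>t\<ge>a. t \<in> S \<longleftrightarrow> t + p \<in> S)"

lemma period_fromD: "period_from a S p \<Longrightarrow> a \<le> t \<Longrightarrow> t \<in> S \<longleftrightarrow> t + p \<in> S"
  unfolding period_from_def by blast

lemma period_from_diff:
  assumes p: "period_from a S p" and q: "period_from a S q" and "p \<le> q"
  shows "period_from a S (q - p)"
  unfolding period_from_def
proof (intro allI impI)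
  fix t assume "a \<le> t"
  have "t + (q - p) \<in> S \<longleftrightarrow> t + (q - p) + p \<in> S"
    using \<open>a \<le> t\<close> by (intro period_fromD[OF p]) simp
  also have "t + (q - p) + p = t + q"
    using \<open>p \<le> q\<close> by simp
  finally show "t \<in> S \<longleftrightarrow> t + (q - p) \<in> S"
    using period_fromD[OF q \<open>a \<le> t\<close>] by blast
qed

lemma period_from_mult:
  assumes p: "period_from a S p"
  shows "period_from a S (j * p)"
proof (induction j)
  case 0
  then show ?case by (simp add: period_from_def)
next
  case (Suc j)
  show ?case
    unfolding period_from_def
  proof (intro allI impI)
    fix t assume "a \<le> t"
    then have "t \<in> S \<longleftrightarrow> t + j * p \<in> S"
      by (rule period_fromD[OF Suc.IH])
    also have "\<dots> \<longleftrightarrow> t + j * p + p \<in> S"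
      using \<open>a \<le> t\<close> by (intro period_fromD[OF p]) simp
    finally show "t \<in> S \<longleftrightarrow> t + Suc j * p \<in> S"
      by (simp add: ac_simps)
  qed
qed

lemma period_from_mod:
  assumes "period_from a S p" and "period_from a S D"
  shows "period_from a S (p mod D)"
  using period_from_diff[OF period_from_mult[OF assms(2), of "p div D"] assms(1)]
  by (simp add: minus_div_mult_eq_mod)

lemma Least_period_from_dvd:
  assumes p: "period_from a S p"
  shows "(LEAST D. 0 < D \<and> period_from a S D) dvd p"
proof (cases "p = 0")
  case False
  define D where "D = (LEAST D. 0 < D \<and> period_from a S D)"
  have D: "0 < D" "period_from a S D"
    using LeastI[of "\<lambda>D. 0 < D \<and> period_from a S D" p] p False unfolding D_def[symmetric] by auto
  have "\<not> (0 < p mod D \<and> period_from a S (p mod D))"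
    using not_less_Least[of "p mod D" "\<lambda>D. 0 < D \<and> period_from a S D"] mod_less_divisor[OF D(1)]
    unfolding D_def[symmetric] by blast
  then have "p mod D = 0"
    using period_from_mod[OF p D(2)] by simp
  then show ?thesis
    unfolding D_def[symmetric] by (simp add: dvd_eq_mod_eq_0)
qed simp

lemma arith_progression_if_element_periods:
  fixes S :: "nat set"
  assumes S_ge: "S \<subseteq> {a..}" and "S \<noteq> {}"
    and pos: "\<And>m. m \<in> S \<Longrightarrow> 0 < m + c"
    and periodic: "\<And>m. m \<in> S \<Longrightarrow> period_from a S (m + c)"
  obtains k D where "a \<le> k" "k < a + D" "0 < D" "D dvd k + c" "S = range (\<lambda>l. k + D * l)"
proof -
  define k where "k = (LEAST t. t \<in> S)"
  have k: "k \<in> S" and k_min: "\<And>t. t \<in> S \<Longrightarrow> k \<le> t"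
    using \<open>S \<noteq> {}\<close> unfolding k_def by (auto intro: LeastI Least_le)
  define D where "D = (LEAST D. 0 < D \<and> period_from a S D)"
  have D: "0 < D" "period_from a S D"
    using LeastI[of "\<lambda>D. 0 < D \<and> period_from a S D", OF conjI[OF pos periodic, OF k k]]
    unfolding D_def by auto
  have D_dvd: "D dvd m + c" if "m \<in> S" for m
    unfolding D_def by (rule Least_period_from_dvd[OF periodic[OF that]])
  have "S = range (\<lambda>l. k + D * l)"
  proof (intro equalityI subsetI)
    fix t assume "t \<in> S"
    then have "D dvd (t + c) - (k + c)"
      using dvd_diff_nat D_dvd k by blast
    then obtain l where "t - k = D * l" by auto
    then show "t \<in> range (\<lambda>l. k + D * l)"
      using k_min[OF \<open>t \<in> S\<close>] by (metis le_add_diff_inverse rangeI)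
  next
    fix t assume "t \<in> range (\<lambda>l. k + D * l)"
    then obtain l where "t = k + D * l" by auto
    moreover have "k \<in> S \<longleftrightarrow> k + l * D \<in> S"
      using S_ge k by (intro period_fromD[OF period_from_mult[OF D(2)]]) auto
    ultimately show "t \<in> S"
      using k by (simp add: mult.commute)
  qed
  moreover have "k < a + D"
  proof (rule ccontr)
    assume "\<not> k < a + D"
    then have "k - D \<in> S \<longleftrightarrow> k - D + D \<in> S"
      by (intro period_fromD[OF D(2)]) simp
    then have "k - D \<in> S"
      using k \<open>\<not> k < a + D\<close> by simp
    then show False using k_min[of "k - D"] D(1) \<open>\<not> k < a + D\<close> by simp
  qed
  moreover have "a \<le> k" using S_ge k by auto
  ultimately show thesis using that D(1) D_dvd[OF k] by blast
qed

lemma offset_additive_scaling: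
  fixes h :: "nat \<Rightarrow> 'a::comm_ring_1"
  assumes additive: "\<And>a b. h (a + b + e) = h a + h b"
  shows "of_nat e * h l = of_nat (e + l) * h 0"
proof -
  define \<delta> where "\<delta> = h 1 - h 0"
  have step: "h (Suc a) = h a + \<delta>" for a
    using additive[of "Suc a" 0] additive[of a 1] unfolding \<delta>_def by (simp add: algebra_simps)
  have affine: "h l = h 0 + of_nat l * \<delta>" for l
    by (induction l) (simp_all add: step algebra_simps)
  have "h 0 = of_nat e * \<delta>"
    using additive[of 0 0] affine[of e] by simp
  then show ?thesis
    using affine[of l] by (simp add: algebra_simps)
qed

lemma harmonic_relation_solution:
  fixes f :: "nat \<Rightarrow> 'a::field_char_0"
  assumes nz: "\<And>l. f l \<noteq> 0"
    and rel: "\<And>a b. f a * f b = (f a + f b) * f (a + b + e)"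
    and "0 < e"
  shows "f l = of_nat e * f 0 / of_nat (e + l)"
proof -
  have "inverse (f (a + b + e)) = inverse (f a) + inverse (f b)" for a b
    using rel[of a b] nz[of a] nz[of b] nz[of "a + b + e"] no_zero_divisors[OF nz[of a] nz[of b]]
    by (simp add: field_simps)
  then have "of_nat e * inverse (f l) = of_nat (e + l) * inverse (f 0)"
    by (rule offset_additive_scaling)
  moreover have "(of_nat (e + l) :: 'a) \<noteq> 0"
    using \<open>0 < e\<close> by (simp only: of_nat_eq_0_iff)
  ultimately show ?thesis
    using nz[of l] nz[of 0] by (simp add: field_simps)
qed

locale beta_relation =
  fixes beta :: "nat \<Rightarrow> nat \<Rightarrow> 'a::field_char_0" and d tau :: "nat \<Rightarrow> nat" and N :: nat
  assumes rel: "\<And>n s m t. N \<le> n \<Longrightarrow> N \<le> s \<Longrightarrow> tau n \<le> m \<Longrightarrow> tau s \<le> t \<Longrightarrow>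
      beta n m * beta s t = beta n m * beta s (m + t + d n) + beta s t * beta n (m + t + d s)"
begin

definition support :: "nat \<Rightarrow> nat set" where
  "support s = {t. tau s \<le> t \<and> beta s t \<noteq> 0}"

lemma support_ge: "support s \<subseteq> {tau s..}"
  by (auto simp: support_def)

lemma rel_diagonal:
  assumes "N \<le> s" "tau s \<le> m" "tau s \<le> t"
  shows "beta s m * beta s t = (beta s m + beta s t) * beta s (m + t + d s)"
  using rel[OF assms(1,1,2,3)] by (simp add: distrib_right)

lemma mem_support_shift_back:
  assumes "N \<le> n" "N \<le> s" "m \<in> support n" "tau s \<le> t" "m + t + d n \<in> support s"
  shows "t \<in> support s"
proof -
  have "beta s t \<noteq> 0"
  proof
    assume "beta s t = 0"
    then have "beta n m * beta s (m + t + d n) = 0"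
      using rel[of n s m t] assms(1-4) by (simp add: support_def)
    then show False
      using assms(3,5) by (simp add: support_def)
  qed
  then show ?thesis
    using assms(4) by (simp add: support_def)
qed

lemma support_add_pos:
  assumes "N \<le> s" "m \<in> support s"
  shows "0 < m + d s"
proof (rule ccontr)
  assume "\<not> 0 < m + d s"
  then have "m + m + d s = m" by simp
  then have "beta s m * beta s m = 0"
    using rel[of s s m m] assms by (simp add: support_def)
  then show False using assms(2) by (simp add: support_def)
qed

lemma period_from_support:
  assumes "N \<le> s" "m \<in> support s"
  shows "period_from (tau s) (support s) (m + d s)"
  unfolding period_from_def
proof (intro allI impI iffI)
  fix t assume t: "tau s \<le> t" "t \<in> support s"
  have "tau s \<le> m" "beta s m * beta s t \<noteq> 0"
    using assms(2) t(2) by (simp_all add: support_def)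
  then have "(beta s m + beta s t) * beta s (m + t + d s) \<noteq> 0"
    by (metis rel_diagonal[OF assms(1) \<open>tau s \<le> m\<close> t(1)])
  then show "t + (m + d s) \<in> support s"
    using t(1) by (simp add: support_def ac_simps)
next
  fix t assume t: "tau s \<le> t" "t + (m + d s) \<in> support s"
  then have "m + t + d s \<in> support s"
    by (simp add: ac_simps)
  with t(1) show "t \<in> support s"
    by (rule mem_support_shift_back[OF assms(1,1,2)])
qed

lemma support_progression:
  assumes "N \<le> s" "support s \<noteq> {}"
  obtains k D where "tau s \<le> k" "k < tau s + D" "0 < D" "D dvd k + d s"
    "support s = range (\<lambda>l. k + D * l)"
  using arith_progression_if_element_periods[OF support_ge assms(2)
      support_add_pos[OF assms(1)] period_from_support[OF assms(1)]] .

lemma beta_on_progression: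
  assumes "N \<le> s" and supp: "support s = range (\<lambda>l. k + D * l)" and "D dvd k + d s"
  shows "beta s (k + D * l) = of_nat (k + d s) * beta s k / of_nat (k + D * l + d s)"
proof -
  obtain e where e: "k + d s = D * e" using \<open>D dvd k + d s\<close> by blast
  have in_supp: "k + D * l \<in> support s" for l using supp by auto
  have "0 < D * e" using support_add_pos[OF \<open>N \<le> s\<close> in_supp[of 0]] e by simp
  then have "0 < D" "0 < e" by simp_all
  define f where "f l = beta s (k + D * l)" for l
  have nz: "f l \<noteq> 0" for l using in_supp[of l] by (simp add: f_def support_def)
  have "f a * f b = (f a + f b) * f (a + b + e)" for a b
  proof -
    have "f a * f b = (f a + f b) * beta s (k + D * a + (k + D * b) + d s)"
      using rel_diagonal[OF \<open>N \<le> s\<close>] in_supp[of a] in_supp[of b] by (simp add: f_def support_def)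
    also have "k + D * a + (k + D * b) + d s = k + D * (a + b + e)"
      using e by (simp add: algebra_simps)
    finally show ?thesis by (simp add: f_def)
  qed
  with nz have "f l = of_nat e * f 0 / of_nat (e + l)"
    using \<open>0 < e\<close> by (rule harmonic_relation_solution)
  also have "\<dots> = of_nat (D * e) * f 0 / of_nat (D * (e + l))"
    using \<open>0 < D\<close> by simp
  also have "D * (e + l) = k + D * l + d s"
    using e by (simp add: algebra_simps)
  finally show ?thesis
    by (simp only: f_def e mult_0_right add_0_right)
qed

lemma beta_closed_form:
  assumes "N \<le> s" "tau s \<le> t" and supp: "support s = range (\<lambda>l. k + D * l)" and "D dvd k + d s"
  shows "beta s t =
    (if t \<in> range (\<lambda>l. k + D * l) then of_nat (k + d s) * beta s k / of_nat (t + d s) else 0)"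
proof (cases "t \<in> range (\<lambda>l. k + D * l)")
  case True
  then obtain l where "t = k + D * l" by blast
  with True show ?thesis
    using beta_on_progression[OF \<open>N \<le> s\<close> supp \<open>D dvd k + d s\<close>] by simp
next
  case False
  then show ?thesis
    using supp \<open>tau s \<le> t\<close> by (auto simp: support_def)
qed

lemma progression_period_dvd:
  assumes "N \<le> s" "N \<le> n" "0 < D" and supp: "support s = range (\<lambda>l. k + D * l)"
    and m: "m \<in> support n"
  shows "D dvd m + d n"
proof -
  \<comment> \<open>A point of the progression far enough out that pulling it back by \<open>m + d n\<close> stays above \<open>tau s\<close>.\<close>
  define u where "u = k + D * (m + d n + tau s)"
  define t where "t = u - (m + d n)"
  have "m + d n + tau s \<le> u"
    using \<open>0 < D\<close> by (simp add: u_def trans_le_add2)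
  then have t: "tau s \<le> t" "m + t + d n = u"
    by (simp_all add: t_def)
  have "u \<in> support s"
    unfolding supp u_def by (rule rangeI)
  then have "t \<in> support s"
    using mem_support_shift_back[OF assms(2,1) m t(1)] t(2) by simp
  then obtain l where "t = k + D * l"
    using supp by auto
  then have "D * l + (m + d n) = D * (m + d n + tau s)"
    using t(2) by (simp add: u_def)
  then show ?thesis
    by (metis dvd_add_right_iff dvd_triv_left)
qed

lemma progression_periods_dvd:
  assumes "N \<le> s" "N \<le> n" "0 < D"
    and "support s = range (\<lambda>l. k + D * l)" and supp_n: "support n = range (\<lambda>l. k' + D' * l)"
  shows "D dvd D'"
proof -
  have "k' + D' * 0 \<in> support n" "k' + D' * 1 \<in> support n"
    unfolding supp_n by (rule rangeI)+
  then have "D dvd k' + D' + d n" "D dvd k' + d n"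
    using progression_period_dvd[OF assms(1-4)] by simp_all
  then have "D dvd (k' + D' + d n) - (k' + d n)"
    by (rule dvd_diff_nat)
  then show ?thesis
    by simp
qed

lemma common_progression_period:
  obtains I k D where
    "\<And>i. i \<in> I \<Longrightarrow> N \<le> i \<and> tau i \<le> k i \<and> k i < tau i + D \<and> D dvd k i + d i"
    "\<And>s. N \<le> s \<Longrightarrow> support s = (if s \<in> I then range (\<lambda>l. k s + D * l) else {})"
proof -
  define I where "I = {s. N \<le> s \<and> support s \<noteq> {}}"
  have "\<exists>k D. tau s \<le> k \<and> k < tau s + D \<and> 0 < D \<and> D dvd k + d s \<and>
      support s = range (\<lambda>l. k + D * l)" if "s \<in> I" for s
  proof -
    from that have "N \<le> s" "support s \<noteq> {}"
      by (simp_all add: I_def)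
    then obtain k D where "tau s \<le> k" "k < tau s + D" "0 < D" "D dvd k + d s"
      "support s = range (\<lambda>l. k + D * l)"
      by (rule support_progression)
    then show ?thesis by blast
  qed
  then obtain k Ds where prog: "\<And>s. s \<in> I \<Longrightarrow> tau s \<le> k s \<and> k s < tau s + Ds s \<and> 0 < Ds s \<and>
      Ds s dvd k s + d s \<and> support s = range (\<lambda>l. k s + Ds s * l)"
    by metis
  \<comment> \<open>If \<open>I = {}\<close>, the choice is junk, but then every claim about it below is vacuous.\<close>
  define s\<^sub>0 where "s\<^sub>0 = (SOME s. s \<in> I)"
  have same_period: "Ds s = Ds s\<^sub>0" if "s \<in> I" for s
  proof -
    have "s\<^sub>0 \<in> I"
      unfolding s\<^sub>0_def using that by (rule someI)
    with that have "N \<le> s" "N \<le> s\<^sub>0"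
      by (simp_all add: I_def)
    moreover have "0 < Ds s" "support s = range (\<lambda>l. k s + Ds s * l)"
      using prog[OF that] by simp_all
    moreover have "0 < Ds s\<^sub>0" "support s\<^sub>0 = range (\<lambda>l. k s\<^sub>0 + Ds s\<^sub>0 * l)"
      using prog[OF \<open>s\<^sub>0 \<in> I\<close>] by simp_all
    ultimately show ?thesis
      using progression_periods_dvd dvd_antisym by metis
  qed
  show thesis
  proof (rule that)
    fix i assume "i \<in> I"
    then show "N \<le> i \<and> tau i \<le> k i \<and> k i < tau i + Ds s\<^sub>0 \<and> Ds s\<^sub>0 dvd k i + d i"
      using prog[of i] same_period[of i] by (simp add: I_def)
  next
    fix s assume "N \<le> s"
    then show "support s = (if s \<in> I then range (\<lambda>l. k s + Ds s\<^sub>0 * l) else {})"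
      using prog[of s] same_period[of s] by (auto simp: I_def)
  qed
qed

lemma support_empty_if_d_tau_zero:
  assumes "N \<le> s" "d s = 0" "tau s = 0"
  shows "support s = {}"
proof (rule ccontr)
  assume "support s \<noteq> {}"
  then obtain k D where "tau s \<le> k" "k < tau s + D" "0 < D" "D dvd k + d s"
    "support s = range (\<lambda>l. k + D * l)"
    using assms(1) support_progression by blast
  have "k + D * 0 \<in> support s"
    unfolding \<open>support s = range (\<lambda>l. k + D * l)\<close> by (rule rangeI)
  then have "D \<le> k + d s"
    using support_add_pos[OF assms(1)] \<open>D dvd k + d s\<close> by (simp add: dvd_imp_le)
  then show False
    using \<open>k < tau s + D\<close> assms(2,3) by simp
qed

end

theorem lemma2p5:
  fixes beta :: "nat \<Rightarrow> nat \<Rightarrow> 'a :: field_char_0"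
    and d tau :: "nat \<Rightarrow> nat"
    and N :: nat
  assumes rel: "\<And>n s m t. N \<le> n \<Longrightarrow> N \<le> s \<Longrightarrow> tau n \<le> m \<Longrightarrow> tau s \<le> t \<Longrightarrow>
      beta n m * beta s t = beta n m * beta s (m + t + d n) + beta s t * beta n (m + t + d s)"
  shows "((\<forall>s t. N \<le> s \<longrightarrow> tau s \<le> t \<longrightarrow> beta s t = 0) \<or>
          (\<exists>(I :: nat set) (\<Delta> :: int) (k :: nat \<Rightarrow> int).
             (\<forall>i\<in>I. N \<le> i \<and> beta i (nat (k i)) \<noteq> 0 \<and>
                     0 \<le> k i - int (tau i) \<and> k i - int (tau i) < \<Delta> \<and>
                     \<Delta> \<le> k i + int (d i) \<and> \<Delta> dvd (k i + int (d i))) \<and>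
             (\<forall>s t. N \<le> s \<longrightarrow> tau s \<le> t \<longrightarrow>
                beta s t =
                  (if s \<in> I \<and> (\<exists>l::nat. int t = k s + \<Delta> * int l)
                   then of_int (k s + int (d s)) * beta s (nat (k s)) / of_int (int t + int (d s))
                   else 0))))
       \<and> ((\<forall>s. N \<le> s \<longrightarrow> d s = 0 \<and> tau s = 0) \<longrightarrow>
            (\<forall>s t. N \<le> s \<longrightarrow> tau s \<le> t \<longrightarrow> beta s t = 0))"
proof -
  interpret beta_relation beta d tau N
    by unfold_locales (rule rel)
  obtain I k D where I: "\<And>i. i \<in> I \<Longrightarrow> N \<le> i \<and> tau i \<le> k i \<and> k i < tau i + D \<and> D dvd k i + d i"
    and supp: "\<And>s. N \<le> s \<Longrightarrow> support s = (if s \<in> I then range (\<lambda>l. k s + D * l) else {})"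
    using common_progression_period by blast
  have int_progression_iff:
    "(\<exists>l::nat. int t = int (k s) + int D * int l) \<longleftrightarrow> t \<in> range (\<lambda>l. k s + D * l)" for s t
    by (auto simp only: of_nat_mult[symmetric] of_nat_add[symmetric] of_nat_eq_iff image_iff)
  have beta_eq: "beta s t = (if s \<in> I \<and> (\<exists>l::nat. int t = int (k s) + int D * int l)
      then of_int (int (k s) + int (d s)) * beta s (nat (int (k s))) / of_int (int t + int (d s))
      else 0)" if "N \<le> s" "tau s \<le> t" for s t
  proof (cases "s \<in> I")
    case True
    then show ?thesis
      using beta_closed_form[OF that, of "k s" D] supp[OF \<open>N \<le> s\<close>] I[OF True]
      by (simp add: int_progression_iff)
  next
    case False
    then show ?thesis
      using supp[OF \<open>N \<le> s\<close>] that by (simp add: support_def)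
  qed
  have k_in_support: "k i \<in> support i" if "i \<in> I" for i
    using supp[of i] I[OF that] that by (simp add: image_iff)
  have witness: "N \<le> i" "beta i (nat (int (k i))) \<noteq> 0" "0 \<le> int (k i) - int (tau i)"
      "int (k i) - int (tau i) < int D" "int D \<le> int (k i) + int (d i)" "int D dvd int (k i) + int (d i)"
    if "i \<in> I" for i
    using k_in_support[OF that] support_add_pos[of i "k i"] I[OF that]
    by (simp_all add: support_def dvd_imp_le flip: of_nat_add)
  have zero_if_d_tau_zero: "beta s t = 0"
    if "\<forall>s. N \<le> s \<longrightarrow> d s = 0 \<and> tau s = 0" "N \<le> s" "tau s \<le> t" for s t
    using support_empty_if_d_tau_zero[of s] that by (auto simp: support_def)
  \<comment> \<open>The second disjunct also covers \<open>I = {}\<close>.\<close>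
  show ?thesis
    by (intro conjI disjI2 exI[of _ I] exI[of _ "int D"] exI[of _ "\<lambda>i. int (k i)"] ballI allI impI)
      (assumption | rule witness beta_eq zero_if_d_tau_zero)+
qed

end
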